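(* Let $d\ge 2$ and let $c_0,\dots,c_7\in\mathbb{Z}_d$. If the $d$-state first degree cellular automaton with parameters $\langle c_0,\dots,c_7\rangle$ is reversible for every number of cells $n\in\mathbb{N}$ under the null boundary condition, then $c_0\equiv c_1\equiv c_2\equiv c_3\equiv 0 \pmod{\mathrm{rad}(d)}$.
   Context: Fix an integer $d\ge 2$ and the state set $S=\mathbb{Z}_d=\{0,1,\dots,d-1\}$. A first degree cellular automaton (FDCA) with parameters $\langle c_0,\dots,c_7\rangle$, $c_i\in\mathbb{Z}_d$, is the one-dimensional 3-neighborhood cellular automaton whose local rule $R:S^3\to S$ is $R(x,y,z)=c_0xyz+c_1xy+c_2xz+c_3yz+c_4x+c_5y+c_6z+c_7 \pmod d$. For $n\in\mathbb{N}$, $n\ge1$, the $n$-cell automaton under the null boundary condition acts on configurations $x=(x_0,\dots,x_{n-1})\in S^n$ by the global map $G_n:S^n\to S^n$, $G_n(x)_i=R(x_{i-1},x_i,x_{i+1})$ for $0\le i\le n-1$, with the convention $x_{-1}=x_n=0$. The automaton is reversible for a given $n$ if $G_n$ is a bijection. $\mathrm{rad}(d)=\prod_{p\mid d,\ p\text{ prime}}p$ is the product of the distinct primes dividing $d$; since $\mathrm{rad}(d)\mid d$, congruences of elements of $\mathbb{Z}_d$ modulo $\mathrm{rad}(d)$ are well defined. *)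

theory Defs
  imports "HOL-Computational_Algebra.Primes"
begin

definition fdca_rule :: "nat \<Rightarrow> (nat \<Rightarrow> int) \<Rightarrow> int \<Rightarrow> int \<Rightarrow> int \<Rightarrow> int" where
  "fdca_rule d c x y z =
     (c 0 * x * y * z + c 1 * x * y + c 2 * x * z + c 3 * y * z
      + c 4 * x + c 5 * y + c 6 * z + c 7) mod int d"

definition cell :: "int list \<Rightarrow> int \<Rightarrow> int" where
  "cell xs i = (if 0 \<le> i \<and> i < int (length xs) then xs ! nat i else 0)"

definition fdca_global :: "nat \<Rightarrow> (nat \<Rightarrow> int) \<Rightarrow> int list \<Rightarrow> int list" where
  "fdca_global d c xs =
     map (\<lambda>i. fdca_rule d c (cell xs (int i - 1)) (cell xs (int i)) (cell xs (int i + 1)))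
         [0..<length xs]"

definition configs :: "nat \<Rightarrow> nat \<Rightarrow> int list set" where
  "configs d n = {xs. length xs = n \<and> (\<forall>x\<in>set xs. 0 \<le> x \<and> x < int d)}"

definition fdca_reversible :: "nat \<Rightarrow> (nat \<Rightarrow> int) \<Rightarrow> nat \<Rightarrow> bool" where
  "fdca_reversible d c n \<longleftrightarrow> bij_betw (fdca_global d c) (configs d n) (configs d n)"

definition rad :: "nat \<Rightarrow> nat" where
  "rad d = (\<Prod>p\<in>prime_factors d. p)"

end

theory Submission
  imports Defs "HOL-Number_Theory.Cong"
begin

(* Reduction modulo a prime factor p of d commutes with the global map, so surjectivity, and by
   finiteness injectivity, passes from Z_d to Z_p for every number of cells. Over the field Z_p
   short configurations give explicit collisions unless the nonlinear coefficients vanish: one cell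
   shows that c5 is a unit; two cells give c3 = c1 = 0, since a map
   (x, y) \<mapsto> (a x y + b x + c y, ...) with a \<noteq> 0 has a line on which the first coordinate is
   constant; three cells give c0 = 0 and c2 = 0, except when c4 = c6 = 0, where four cells are
   needed. As every prime factor of d divides c0, ..., c3, so does rad d. *)

definition fdca_poly :: "(nat \<Rightarrow> int) \<Rightarrow> int \<Rightarrow> int \<Rightarrow> int \<Rightarrow> int" where
  "fdca_poly c x y z = c 0 * x * y * z + c 1 * x * y + c 2 * x * z + c 3 * y * z
      + c 4 * x + c 5 * y + c 6 * z + c 7"

definition fdca_poly_global :: "(nat \<Rightarrow> int) \<Rightarrow> int list \<Rightarrow> int list" where
  "fdca_poly_global c xs =
     map (\<lambda>i. fdca_poly c (cell xs (int i - 1)) (cell xs (int i)) (cell xs (int i + 1)))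
         [0..<length xs]"

abbreviation mod_list :: "int \<Rightarrow> int list \<Rightarrow> int list" where
  "mod_list m \<equiv> map (\<lambda>v. v mod m)"

lemma fdca_global_eq_mod_list: "fdca_global d c xs = mod_list (int d) (fdca_poly_global c xs)"
  by (simp add: fdca_global_def fdca_poly_global_def fdca_rule_def fdca_poly_def)

lemma fdca_poly_mod: "fdca_poly c (x mod m) (y mod m) (z mod m) mod m = fdca_poly c x y z mod m"
proof -
  have "[fdca_poly c (x mod m) (y mod m) (z mod m) = fdca_poly c x y z] (mod m)"
    unfolding fdca_poly_def by (intro cong_add cong_mult cong_refl) (simp_all add: cong_def)
  then show ?thesis by (simp add: cong_def)
qed

lemma cell_mod_list: "cell (mod_list m xs) i = cell xs i mod m"
  by (simp add: cell_def nat_less_iff)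

lemma mod_list_fdca_poly_global_mod_list:
  "mod_list m (fdca_poly_global c (mod_list m xs)) = mod_list m (fdca_poly_global c xs)"
  by (simp add: fdca_poly_global_def cell_mod_list fdca_poly_mod)

lemma configs_eq_image_mod_list:
  assumes "0 < p" "p \<le> d"
  shows "configs p n = mod_list (int p) ` configs d n"
proof
  show "mod_list (int p) ` configs d n \<subseteq> configs p n"
    using assms by (auto simp: configs_def)
  show "configs p n \<subseteq> mod_list (int p) ` configs d n"
  proof
    fix xs assume xs: "xs \<in> configs p n"
    then have "xs = mod_list (int p) xs" by (auto simp: configs_def intro!: map_idI[symmetric])
    moreover have "xs \<in> configs d n" using xs assms by (force simp: configs_def)
    ultimately show "xs \<in> mod_list (int p) ` configs d n" by blast
  qed
qed

lemma finite_configs: "finite (configs d n)"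
proof (rule finite_subset)
  show "configs d n \<subseteq> {xs. set xs \<subseteq> {0..<int d} \<and> length xs = n}"
    by (auto simp: configs_def)
qed (simp add: finite_lists_length_eq)

lemma inj_on_fdca_global_if_dvd:
  assumes "p dvd d" "0 < d" "fdca_reversible d c n"
  shows "inj_on (fdca_global p c) (configs p n)"
proof -
  have "0 < p" "p \<le> d" using assms by (auto intro: dvd_imp_le dvd_pos_nat)
  have commute: "fdca_global p c (mod_list (int p) xs) = mod_list (int p) (fdca_global d c xs)" for xs
    using \<open>p dvd d\<close>
    by (simp add: fdca_global_eq_mod_list mod_list_fdca_poly_global_mod_list mod_mod_cancel)
  have "fdca_global p c ` configs p n = mod_list (int p) ` fdca_global d c ` configs d n"
    by (simp add: configs_eq_image_mod_list[OF \<open>0 < p\<close> \<open>p \<le> d\<close>] image_image commute)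
  also have "fdca_global d c ` configs d n = configs d n"
    using assms(3) by (simp add: fdca_reversible_def bij_betw_def)
  finally have "fdca_global p c ` configs p n = configs p n"
    by (simp add: configs_eq_image_mod_list[OF \<open>0 < p\<close> \<open>p \<le> d\<close>])
  then show ?thesis by (intro eq_card_imp_inj_on finite_configs) simp
qed

lemma cong_solvable_mod_prime:
  fixes q a b :: int
  assumes "prime q" "\<not> q dvd a"
  shows "\<exists>x. [a * x = b] (mod q)"
proof -
  have "coprime a q" using assms prime_imp_coprime coprime_commute by blast
  then show ?thesis by (simp add: cong_solve_dvd_int)
qed

lemma prime_dvd_xy_coeff_if_inj_mod:
  fixes q a b c a' b' c' :: int
  assumes "prime q"
    and inj: "\<And>x y x' y'. [a*x*y + b*x + c*y = a*x'*y' + b*x' + c*y'] (mod q) \<Longrightarrow>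
      [a'*x*y + b'*x + c'*y = a'*x'*y' + b'*x' + c'*y'] (mod q) \<Longrightarrow>
      [x = x'] (mod q) \<and> [y = y'] (mod q)"
  shows "q dvd a"
proof (rule ccontr)
  assume "\<not> q dvd a"
  obtain x0 where "[a * x0 = - c] (mod q)" using cong_solvable_mod_prime[OF assms(1) \<open>\<not> q dvd a\<close>] ..
  then have x0: "q dvd a * x0 + c" by (simp add: cong_iff_dvd_diff)
  obtain y0 where "[a * y0 = - b] (mod q)" using cong_solvable_mod_prime[OF assms(1) \<open>\<not> q dvd a\<close>] ..
  then have y0: "q dvd a * y0 + b" by (simp add: cong_iff_dvd_diff)
  \<comment> \<open>The first coordinate is constant on the line x = x0 and takes the same value at (x0 + 1, y0).\<close>
  have on_line: "[a*x0*y + b*x0 + c*y = b*x0] (mod q)" for y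
  proof -
    have "a*x0*y + b*x0 + c*y - b*x0 = (a*x0 + c) * y" by (simp add: algebra_simps)
    then show ?thesis using x0 by (simp add: cong_iff_dvd_diff)
  qed
  have "q dvd a * (c*y0 - b*x0)"
  proof -
    have "a * (c*y0 - b*x0) = c * (a*y0 + b) - b * (a*x0 + c)" by (simp add: algebra_simps)
    then show ?thesis using x0 y0 by (simp add: dvd_diff)
  qed
  then have "q dvd c*y0 - b*x0" using assms(1) \<open>\<not> q dvd a\<close> by (simp add: prime_dvd_mult_iff)
  have off_line: "[a*(x0+1)*y0 + b*(x0+1) + c*y0 = b*x0] (mod q)"
  proof -
    have "a*(x0+1)*y0 + b*(x0+1) + c*y0 - b*x0 = (x0+1) * (a*y0 + b) + (c*y0 - b*x0)"
      by (simp add: algebra_simps)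
    then show ?thesis
      unfolding cong_iff_dvd_diff using y0 \<open>q dvd c*y0 - b*x0\<close> by (metis dvd_add dvd_mult)
  qed
  have "\<not> q dvd 1" using assms(1) not_prime_unit by blast
  show False
  proof (cases "q dvd a'*x0 + c'")
    case True
    have "[a'*x0*1 + b'*x0 + c'*1 = a'*x0*0 + b'*x0 + c'*0] (mod q)"
      using True by (simp add: cong_iff_dvd_diff)
    moreover have "[a*x0*1 + b*x0 + c*1 = a*x0*0 + b*x0 + c*0] (mod q)"
      using on_line[of 1] on_line[of 0] by (metis cong_sym cong_trans)
    ultimately have "[1 = 0] (mod q)" using inj by blast
    then show False using \<open>\<not> q dvd 1\<close> by (simp add: cong_iff_dvd_diff)
  next
    case False
    obtain y where y: "[(a'*x0 + c') * y = a'*(x0+1)*y0 + b'*(x0+1) + c'*y0 - b'*x0] (mod q)"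
      using cong_solvable_mod_prime[OF assms(1) False] ..
    have "[a'*x0*y + b'*x0 + c'*y = a'*(x0+1)*y0 + b'*(x0+1) + c'*y0] (mod q)"
      using y by (simp add: cong_iff_dvd_diff algebra_simps)
    moreover have "[a*x0*y + b*x0 + c*y = a*(x0+1)*y0 + b*(x0+1) + c*y0] (mod q)"
      using on_line[of y] off_line by (metis cong_sym cong_trans)
    ultimately have "[x0 = x0 + 1] (mod q)" using inj by blast
    then show False using \<open>\<not> q dvd 1\<close> by (simp add: cong_iff_dvd_diff)
  qed
qed

locale fdca_injective_mod_prime =
  fixes q :: int and c :: "nat \<Rightarrow> int"
  assumes prime: "prime q"
    and injective: "\<And>xs ys. length xs = length ys \<Longrightarrow>
      mod_list q (fdca_poly_global c xs) = mod_list q (fdca_poly_global c ys) \<Longrightarrow>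
      mod_list q xs = mod_list q ys"

lemma fdca_injective_mod_prime_if_inj_on:
  assumes "prime p" and inj: "\<And>n. 1 \<le> n \<Longrightarrow> inj_on (fdca_global p c) (configs p n)"
  shows "fdca_injective_mod_prime (int p) c"
proof
  show "prime (int p)" using \<open>prime p\<close> by simp
  fix xs ys :: "int list"
  assume len: "length xs = length ys"
    and eq: "mod_list (int p) (fdca_poly_global c xs) = mod_list (int p) (fdca_poly_global c ys)"
  show "mod_list (int p) xs = mod_list (int p) ys"
  proof (cases "xs = []")
    case False
    have "0 < p" using \<open>prime p\<close> by (simp add: prime_gt_0_nat)
    then have in_configs: "mod_list (int p) zs \<in> configs p (length xs)" if "length zs = length xs" for zs
      using that by (auto simp: configs_def)
    have "fdca_global p c (mod_list (int p) xs) = fdca_global p c (mod_list (int p) ys)"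
      using eq by (simp add: fdca_global_eq_mod_list mod_list_fdca_poly_global_mod_list)
    moreover have "inj_on (fdca_global p c) (configs p (length xs))"
      using False by (intro inj) (simp add: Suc_le_eq)
    ultimately show ?thesis
      using in_configs len by (metis inj_onD)
  qed (use len in simp)
qed

context fdca_injective_mod_prime
begin

lemma injective_one_cell: "[fdca_poly c 0 a 0 = fdca_poly c 0 a' 0] (mod q) \<Longrightarrow> [a = a'] (mod q)"
  using injective[of "[a]" "[a']"] by (simp add: fdca_poly_global_def cell_def cong_def)

lemma injective_two_cells:
  "[fdca_poly c 0 a b = fdca_poly c 0 a' b'] (mod q) \<Longrightarrow> [fdca_poly c a b 0 = fdca_poly c a' b' 0] (mod q)
   \<Longrightarrow> [a = a'] (mod q) \<and> [b = b'] (mod q)"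
  using injective[of "[a, b]" "[a', b']"] by (simp add: fdca_poly_global_def cell_def cong_def upt_rec)

lemma injective_three_cells:
  "[fdca_poly c 0 a b = fdca_poly c 0 a' b'] (mod q) \<Longrightarrow> [fdca_poly c a b e = fdca_poly c a' b' e'] (mod q)
   \<Longrightarrow> [fdca_poly c b e 0 = fdca_poly c b' e' 0] (mod q) \<Longrightarrow> [b = b'] (mod q)"
  using injective[of "[a, b, e]" "[a', b', e']"]
  by (simp add: fdca_poly_global_def cell_def cong_def upt_rec nth_Cons')

lemma injective_four_cells:
  "[fdca_poly c 0 a b = fdca_poly c 0 a' b'] (mod q) \<Longrightarrow> [fdca_poly c a b e = fdca_poly c a' b' e'] (mod q)
   \<Longrightarrow> [fdca_poly c b e f = fdca_poly c b' e' f'] (mod q) \<Longrightarrow> [fdca_poly c e f 0 = fdca_poly c e' f' 0] (mod q)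
   \<Longrightarrow> [e = e'] (mod q)"
  using injective[of "[a, b, e, f]" "[a', b', e', f']"]
  by (simp add: fdca_poly_global_def cell_def cong_def upt_rec nth_Cons')

lemma not_dvd_c5: "\<not> q dvd c 5"
proof
  assume "q dvd c 5"
  then have "[fdca_poly c 0 1 0 = fdca_poly c 0 0 0] (mod q)"
    by (simp add: fdca_poly_def cong_iff_dvd_diff)
  then have "[1 = 0] (mod q)" by (rule injective_one_cell)
  then show False using prime not_prime_unit by (auto simp: cong_iff_dvd_diff)
qed

lemma dvd_c3: "q dvd c 3"
proof (rule prime_dvd_xy_coeff_if_inj_mod[OF prime])
  fix x y x' y'
  assume "[c 3*x*y + c 5*x + c 6*y = c 3*x'*y' + c 5*x' + c 6*y'] (mod q)"
    and "[c 1*x*y + c 4*x + c 5*y = c 1*x'*y' + c 4*x' + c 5*y'] (mod q)"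
  then show "[x = x'] (mod q) \<and> [y = y'] (mod q)"
    by (intro injective_two_cells) (simp_all add: fdca_poly_def cong_add_rcancel)
qed

lemma dvd_c1: "q dvd c 1"
proof (rule prime_dvd_xy_coeff_if_inj_mod[OF prime])
  fix x y x' y'
  assume "[c 1*x*y + c 5*x + c 4*y = c 1*x'*y' + c 5*x' + c 4*y'] (mod q)"
    and "[c 3*x*y + c 6*x + c 5*y = c 3*x'*y' + c 6*x' + c 5*y'] (mod q)"
  then have "[y = y'] (mod q) \<and> [x = x'] (mod q)"
    by (intro injective_two_cells) (simp_all add: fdca_poly_def cong_add_lcancel ac_simps)
  then show "[x = x'] (mod q) \<and> [y = y'] (mod q)" by blast
qed

(* The configurations [a, 0, b] and [a - s, 1, b - t] have congruent images in the outer cells. *)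
lemma middle_cell_separates:
  assumes s: "[c 5 * s = c 6] (mod q)" and t: "[c 5 * t = c 4] (mod q)"
  shows "\<not> [fdca_poly c a 0 b = fdca_poly c (a - s) 1 (b - t)] (mod q)"
proof
  assume middle: "[fdca_poly c a 0 b = fdca_poly c (a - s) 1 (b - t)] (mod q)"
  have first: "[fdca_poly c 0 a 0 = fdca_poly c 0 (a - s) 1] (mod q)"
  proof -
    have "fdca_poly c 0 a 0 - fdca_poly c 0 (a - s) 1 = c 3 * (s - a) + (c 5 * s - c 6)"
      by (simp add: fdca_poly_def algebra_simps)
    then show ?thesis
      unfolding cong_iff_dvd_diff using dvd_c3 s by (metis cong_iff_dvd_diff dvd_add dvd_mult2)
  qed
  have last: "[fdca_poly c 0 b 0 = fdca_poly c 1 (b - t) 0] (mod q)"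
  proof -
    have "fdca_poly c 0 b 0 - fdca_poly c 1 (b - t) 0 = c 1 * (t - b) + (c 5 * t - c 4)"
      by (simp add: fdca_poly_def algebra_simps)
    then show ?thesis
      unfolding cong_iff_dvd_diff using dvd_c1 t by (metis cong_iff_dvd_diff dvd_add dvd_mult2)
  qed
  have "[0 = 1] (mod q)" using first middle last by (rule injective_three_cells)
  then show False using prime not_prime_unit by (auto simp: cong_iff_dvd_diff)
qed

lemma dvd_c0: "q dvd c 0"
proof (rule ccontr)
  assume "\<not> q dvd c 0"
  obtain s where s: "[c 5 * s = c 6] (mod q)" using cong_solvable_mod_prime[OF prime not_dvd_c5] ..
  obtain t where t: "[c 5 * t = c 4] (mod q)" using cong_solvable_mod_prime[OF prime not_dvd_c5] ..
  obtain b where b: "[c 0 * b = (c 0 + c 2) * t + 1] (mod q)"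
    using cong_solvable_mod_prime[OF prime \<open>\<not> q dvd c 0\<close>] ..
  \<comment> \<open>With this b the middle-cell equation becomes linear in a with coefficient 1.\<close>
  define a where "a = (c 0 + c 2) * s * b - ((c 0 + c 2) * s * t - c 4 * s - c 6 * t + c 5)"
  have "fdca_poly c a 0 b - fdca_poly c (a - s) 1 (b - t)
      = c 1 * (s - a) + c 3 * (t - b) - a * (c 0 * b - ((c 0 + c 2) * t + 1))"
    by (simp add: fdca_poly_def a_def algebra_simps)
  then have "[fdca_poly c a 0 b = fdca_poly c (a - s) 1 (b - t)] (mod q)"
    unfolding cong_iff_dvd_diff using dvd_c1 dvd_c3 b
    by (metis cong_iff_dvd_diff dvd_add dvd_diff dvd_mult dvd_mult2)
  then show False using middle_cell_separates[OF s t] by blast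
qed

(* Modulo q the rule is c2 x z + c5 y + c7, and [c5, 0, 0, x], [c5, c2 c5, - c5, x] collide. *)
lemma dvd_c2_if_dvd_c4_c6:
  assumes "q dvd c 4" "q dvd c 6"
  shows "q dvd c 2"
proof (rule ccontr)
  assume "\<not> q dvd c 2"
  then have "\<not> q dvd c 2 * c 2" using prime by (simp add: prime_dvd_mult_iff)
  then obtain x where x: "[c 2 * c 2 * x = c 5] (mod q)"
    using cong_solvable_mod_prime[OF prime] by blast
  have reduced: "[fdca_poly c x y z = c 2 * x * z + c 5 * y + c 7] (mod q)" for x y z
  proof -
    have "fdca_poly c x y z - (c 2 * x * z + c 5 * y + c 7)
        = c 0 * (x * y * z) + c 1 * (x * y) + c 3 * (y * z) + c 4 * x + c 6 * z"
      by (simp add: fdca_poly_def algebra_simps)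
    then show ?thesis
      unfolding cong_iff_dvd_diff using dvd_c0 dvd_c1 dvd_c3 assms by (metis dvd_add dvd_mult2)
  qed
  have cells: "[fdca_poly c x y z = fdca_poly c x' y' z'] (mod q)"
    if "[c 2 * x * z + c 5 * y = c 2 * x' * z' + c 5 * y'] (mod q)" for x y z x' y' z'
  proof -
    have "[c 2 * x * z + c 5 * y + c 7 = c 2 * x' * z' + c 5 * y' + c 7] (mod q)"
      using that by (simp only: cong_add_rcancel)
    then show ?thesis using reduced[of x y z] reduced[of x' y' z'] cong_sym cong_trans by metis
  qed
  have "[fdca_poly c 0 (c 5) 0 = fdca_poly c 0 (c 5) (c 2 * c 5)] (mod q)"
    by (rule cells) simp
  moreover have "[fdca_poly c (c 5) 0 0 = fdca_poly c (c 5) (c 2 * c 5) (- c 5)] (mod q)"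
    by (rule cells) (simp add: algebra_simps)
  moreover have "[fdca_poly c 0 0 x = fdca_poly c (c 2 * c 5) (- c 5) x] (mod q)"
  proof (rule cells)
    have "c 2 * 0 * x + c 5 * 0 - (c 2 * (c 2 * c 5) * x + c 5 * (- c 5))
        = - c 5 * (c 2 * c 2 * x - c 5)"
      by (simp add: algebra_simps)
    then show "[c 2 * 0 * x + c 5 * 0 = c 2 * (c 2 * c 5) * x + c 5 * (- c 5)] (mod q)"
      using x unfolding cong_iff_dvd_diff by (metis dvd_mult)
  qed
  moreover have "[fdca_poly c 0 x 0 = fdca_poly c (- c 5) x 0] (mod q)"
    by (rule cells) simp
  ultimately have "[0 = - c 5] (mod q)" by (rule injective_four_cells)
  then show False using not_dvd_c5 by (simp add: cong_iff_dvd_diff)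
qed

lemma dvd_c2: "q dvd c 2"
proof (rule ccontr)
  assume "\<not> q dvd c 2"
  obtain s where s: "[c 5 * s = c 6] (mod q)" using cong_solvable_mod_prime[OF prime not_dvd_c5] ..
  obtain t where t: "[c 5 * t = c 4] (mod q)" using cong_solvable_mod_prime[OF prime not_dvd_c5] ..
  define R where "R = c 2 * s * t - c 4 * s - c 6 * t + c 5"
  have no_solution: "\<not> [c 2 * (a * t + s * b) = R] (mod q)" for a b
  proof
    assume "[c 2 * (a * t + s * b) = R] (mod q)"
    moreover have "fdca_poly c a 0 b - fdca_poly c (a - s) 1 (b - t)
        = c 0 * ((s - a) * (b - t)) + c 1 * (s - a) + c 3 * (t - b) + (c 2 * (a * t + s * b) - R)"
      by (simp add: fdca_poly_def R_def algebra_simps)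
    ultimately have "[fdca_poly c a 0 b = fdca_poly c (a - s) 1 (b - t)] (mod q)"
      unfolding cong_iff_dvd_diff using dvd_c0 dvd_c1 dvd_c3 by (metis dvd_add dvd_mult2)
    then show False using middle_cell_separates[OF s t] by blast
  qed
  have "q dvd c 2 * t"
  proof (rule ccontr)
    assume "\<not> q dvd c 2 * t"
    then obtain a where "[c 2 * t * a = R] (mod q)" using cong_solvable_mod_prime[OF prime] by blast
    then show False using no_solution[of a 0] by (simp add: ac_simps)
  qed
  moreover have "q dvd c 2 * s"
  proof (rule ccontr)
    assume "\<not> q dvd c 2 * s"
    then obtain b where "[c 2 * s * b = R] (mod q)" using cong_solvable_mod_prime[OF prime] by blast
    then show False using no_solution[of 0 b] by (simp add: ac_simps)
  qed
  ultimately have "q dvd t" "q dvd s" using prime \<open>\<not> q dvd c 2\<close> by (simp_all add: prime_dvd_mult_iff)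
  then have "q dvd c 4" "q dvd c 6"
    using cong_dvd_iff[OF t] cong_dvd_iff[OF s] by (simp_all add: dvd_mult)
  then show False using dvd_c2_if_dvd_c4_c6 \<open>\<not> q dvd c 2\<close> by blast
qed

end

lemma prod_primes_dvd:
  fixes A :: "nat set" and x :: int
  assumes "finite A" "\<And>p. p \<in> A \<Longrightarrow> prime p" "\<And>p. p \<in> A \<Longrightarrow> int p dvd x"
  shows "int (\<Prod>A) dvd x"
  using assms
proof (induction A rule: finite_induct)
  case (insert p A)
  have "coprime p (\<Prod>A)"
    using insert.hyps(2) insert.prems(1) by (intro prod_coprime_right primes_coprime) auto
  then have "coprime (int p) (int (\<Prod>A))" by (simp only: coprime_int_iff)
  moreover have "int (\<Prod>A) dvd x" using insert.IH insert.prems by blast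
  ultimately have "int p * int (\<Prod>A) dvd x"
    using insert.prems by (intro divides_mult) simp_all
  then show ?case using insert.hyps by simp
qed simp

theorem lemma2:
  fixes d :: nat and c :: "nat \<Rightarrow> int"
  assumes "d \<ge> 2"
    and "\<forall>i<8. 0 \<le> c i \<and> c i < int d"
    and "\<forall>n\<ge>1. fdca_reversible d c n"
  shows "\<forall>i<4. c i mod int (rad d) = 0"
proof -
  have prime_factor_dvd: "int p dvd c i" if "p \<in> prime_factors d" "i < 4" for p i
  proof -
    have "prime p" "p dvd d" using that by auto
    then have "fdca_injective_mod_prime (int p) c"
      using assms(1,3) by (intro fdca_injective_mod_prime_if_inj_on inj_on_fdca_global_if_dvd) auto
    moreover have "i = 0 \<or> i = 1 \<or> i = 2 \<or> i = 3" using \<open>i < 4\<close> by auto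
    ultimately show ?thesis
      using fdca_injective_mod_prime.dvd_c0 fdca_injective_mod_prime.dvd_c1
        fdca_injective_mod_prime.dvd_c2 fdca_injective_mod_prime.dvd_c3 by blast
  qed
  show ?thesis
  proof (intro allI impI)
    fix i :: nat assume "i < 4"
    then have "int (rad d) dvd c i"
      unfolding rad_def by (intro prod_primes_dvd) (auto intro: prime_factor_dvd)
    then show "c i mod int (rad d) = 0" by simp
  qed
qed

end
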